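(* Let $n$ be a positive odd integer. Then $$ \sum_{k=0}^{n-1}\frac{(aq;q^2)_k\,(-q/a;q^2)_k\, q^{2k}}{(q^2;q^2)_k} \equiv (-1)^{(n-1)/2} q^{(n^2-1)/2} \pmod{(1-aq^n)(a+q^n)}, $$ and $$ \sum_{k=0}^{n-1}\frac{(aq;q^2)_k\,(q/a;q^2)_k\, q^{2k}}{(q^2;q^2)_k} \equiv q^{(n^2-1)/2} \pmod{(1-aq^n)(a-q^n)}. $$
   Context: $a,q$ are indeterminates. The $q$-shifted factorial is $(y;q)_0=1$ and $(y;q)_m=(1-y)(1-yq)\cdots(1-yq^{m-1})$ for $m\geqslant1$. For rational functions $A,B$ and a polynomial $P$, $A\equiv B\pmod P$ means $A-B=P\cdot C/D$ for polynomials $C,D$ with $D$ coprime to $P$. *)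

theory Defs
  imports "HOL-Computational_Algebra.Polynomial" "HOL-Computational_Algebra.Fraction_Field"
begin

text \<open>Bivariate polynomials in the indeterminates a, q with integer coefficients:
  polynomials in a whose coefficients are polynomials in q.\<close>
type_synonym bipoly = "int poly poly"
type_synonym ratfun = "bipoly fract"

definition var_a :: bipoly where "var_a = [:0, 1:]"
definition var_q :: bipoly where "var_q = [:[:0, 1:]:]"

definition to_rf :: "bipoly \<Rightarrow> ratfun" where "to_rf p = Fract p 1"

definition qpoch :: "'a::comm_ring_1 \<Rightarrow> 'a \<Rightarrow> nat \<Rightarrow> 'a" where
  "qpoch y q m = (\<Prod>j<m. 1 - y * q ^ j)"

definition cong_rf :: "ratfun \<Rightarrow> ratfun \<Rightarrow> bipoly \<Rightarrow> bool" where
  "cong_rf A B P \<longleftrightarrow> (\<exists>C D. D \<noteq> 0 \<and> coprime D P \<and> A - B = Fract (P * C) D)"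

end

theory Submission
  imports Defs "HOL-Computational_Algebra.Polynomial_Factorial"
begin

text \<open>
  Write n = 2m + 1 and p = q^2, and let s be \<plusminus>1 (any nonzero s in \<int>[q] works).
  Modulo 1 - aq^n we have aq \<equiv> p^(-m) and sq/a \<equiv> s p^(m+1); modulo a - sq^n the two values
  are exchanged. As the summand is symmetric in these two parameters, modulo either factor the
  sum becomes the terminating q-Chu--Vandermonde sum
  \<Sum>_k (p^(-m);p)_k (b;p)_k p^k / (p;p)_k = b^m with b = s p^(m+1), and b^m = s^m q^((n^2-1)/2).
  The two factors are coprime, so the congruences combine. All congruences live in the ring of
  fractions whose denominators are coprime to the modulus, where they behave like congruences
  modulo an ideal.
\<close>

lemma qpoch_0 [simp]: "qpoch y q 0 = 1"
  by (simp add: qpoch_def)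

lemma qpoch_Suc: "qpoch y q (Suc k) = qpoch y q k * (1 - y * q ^ k)"
  by (simp add: qpoch_def)

lemma qpoch_Suc_shift: "qpoch y q (Suc k) = (1 - y) * qpoch (y * q) q k"
  unfolding qpoch_def by (subst prod.lessThan_Suc_shift) (simp add: mult_ac)

lemma qpoch_inverse_power_eq_0:
  assumes "w * p = 1" and "m < k"
  shows "qpoch (w ^ m) p k = 0"
proof -
  have "1 - w ^ m * p ^ m = 0"
    using assms(1) by (simp add: power_mult_distrib [symmetric])
  then show ?thesis
    unfolding qpoch_def using assms(2) by (intro prod_zero) auto
qed

lemma qpoch_Suc_mult_power:
  assumes "w * p = 1"
  shows "qpoch (w * y) p (Suc k) * p ^ Suc k = qpoch y p (Suc k) - qpoch y p k * (1 - p ^ Suc k)"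
proof -
  have wyp: "w * y * p = y" and "(1 - w * y) * p = p - y"
    using assms by (simp_all add: algebra_simps) (metis mult.assoc mult.commute mult_1)+
  have "qpoch (w * y) p (Suc k) * p ^ Suc k = (1 - w * y) * p * p ^ k * qpoch y p k"
    unfolding qpoch_Suc_shift wyp by (simp add: mult_ac)
  also have "\<dots> = qpoch y p k * (p - y) * p ^ k"
    by (simp only: \<open>(1 - w * y) * p = p - y\<close>) (simp add: mult_ac)
  finally show ?thesis
    by (simp add: qpoch_Suc algebra_simps)
qed

lemma qpoch_inverse_power_ratio_Suc:
  fixes p :: "'a::field"
  assumes "p \<noteq> 0" and "qpoch p p (Suc k) \<noteq> 0"
  shows "qpoch (inverse p ^ Suc m) p (Suc k) / qpoch p p (Suc k) * p ^ Suc k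
    = qpoch (inverse p ^ m) p (Suc k) / qpoch p p (Suc k) - qpoch (inverse p ^ m) p k / qpoch p p k"
proof -
  have poch_Suc: "qpoch p p (Suc k) = qpoch p p k * (1 - p ^ Suc k)"
    by (simp add: qpoch_Suc)
  then have "qpoch p p k \<noteq> 0" and "1 - p ^ Suc k \<noteq> 0"
    using assms(2) by simp_all
  then have "qpoch (inverse p ^ m) p (Suc k) / qpoch p p (Suc k) - qpoch (inverse p ^ m) p k / qpoch p p k
      = (qpoch (inverse p ^ m) p (Suc k) - qpoch (inverse p ^ m) p k * (1 - p ^ Suc k))
        / qpoch p p (Suc k)"
    unfolding poch_Suc by (simp add: field_simps)
  also have "\<dots> = qpoch (inverse p ^ Suc m) p (Suc k) / qpoch p p (Suc k) * p ^ Suc k"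
    using qpoch_Suc_mult_power [of "inverse p" p "inverse p ^ m" k] assms(1) by simp
  finally show ?thesis ..
qed

lemma qchu_vandermonde:
  fixes p b :: "'a::field"
  assumes p: "p \<noteq> 0" and "\<And>j. qpoch p p j \<noteq> 0" and "m < N"
  shows "(\<Sum>k<N. qpoch (inverse p ^ m) p k * qpoch b p k * p ^ k / qpoch p p k) = b ^ m"
  using \<open>m < N\<close>
proof (induction m arbitrary: N)
  case 0
  then obtain M where N: "N = Suc M"
    by (cases N) auto
  have "qpoch 1 p (Suc k) = 0" for k
    by (simp add: qpoch_Suc_shift)
  then show ?case
    unfolding N sum.lessThan_Suc_shift by simp
next
  case (Suc m)
  then obtain M where N: "N = Suc M" and "m < M"
    by (cases N) auto
  define e where "e j k = qpoch (inverse p ^ j) p k / qpoch p p k" for j k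
  define f where "f k = e m k * qpoch b p k" for k
  have term_e: "qpoch (inverse p ^ j) p k * qpoch b p k * p ^ k / qpoch p p k
      = e j k * qpoch b p k * p ^ k" for j k
    by (simp add: e_def)
  have e_Suc: "e (Suc m) (Suc k) * p ^ Suc k = e m (Suc k) - e m k" for k
    unfolding e_def using p assms(2) by (rule qpoch_inverse_power_ratio_Suc)
  have step: "e (Suc m) (Suc k) * qpoch b p (Suc k) * p ^ Suc k
      = f (Suc k) - f k + b * (e m k * qpoch b p k * p ^ k)" for k
  proof -
    have "e (Suc m) (Suc k) * qpoch b p (Suc k) * p ^ Suc k
        = (e m (Suc k) - e m k) * qpoch b p (Suc k)"
      by (simp only: e_Suc [symmetric] mult_ac)
    also have "\<dots> = f (Suc k) - f k + b * (e m k * qpoch b p k * p ^ k)"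
      by (simp add: f_def qpoch_Suc algebra_simps)
    finally show ?thesis .
  qed
  have "f 0 = 1"
    by (simp add: f_def e_def)
  have "f M = 0"
    using qpoch_inverse_power_eq_0 [OF _ \<open>m < M\<close>, of "inverse p" p] p by (simp add: f_def e_def)
  have IH: "(\<Sum>k<M. e m k * qpoch b p k * p ^ k) = b ^ m"
    using Suc.IH [OF \<open>m < M\<close>] by (simp only: term_e)
  have "(\<Sum>k<N. e (Suc m) k * qpoch b p k * p ^ k)
      = 1 + (\<Sum>k<M. e (Suc m) (Suc k) * qpoch b p (Suc k) * p ^ Suc k)"
    unfolding N sum.lessThan_Suc_shift by (simp add: e_def)
  also have "\<dots> = 1 + (\<Sum>k<M. f (Suc k) - f k) + b * (\<Sum>k<M. e m k * qpoch b p k * p ^ k)"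
    by (simp only: step sum.distrib sum_distrib_left add.assoc)
  also have "\<dots> = b ^ Suc m"
    using \<open>f 0 = 1\<close> \<open>f M = 0\<close> by (simp add: sum_lessThan_telescope IH)
  finally show ?case
    unfolding term_e .
qed

definition local_fract :: "'a::{idom,semiring_gcd} \<Rightarrow> 'a fract set" where
  "local_fract P = {Fract c d |c d. d \<noteq> 0 \<and> coprime d P}"

definition local_ideal :: "'a::{idom,semiring_gcd} \<Rightarrow> 'a \<Rightarrow> 'a fract set" where
  "local_ideal P I = {Fract I 1 * x |x. x \<in> local_fract P}"

definition local_cong :: "'a::{idom,semiring_gcd} \<Rightarrow> 'a \<Rightarrow> 'a fract \<Rightarrow> 'a fract \<Rightarrow> bool" where
  "local_cong P I x y \<longleftrightarrow> x - y \<in> local_ideal P I"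

lemma Fract_in_local_fract: "d \<noteq> 0 \<Longrightarrow> coprime d P \<Longrightarrow> Fract c d \<in> local_fract P"
  by (auto simp: local_fract_def)

lemma Fract_1_in_local_fract [simp]: "Fract c 1 \<in> local_fract P"
  by (simp add: Fract_in_local_fract)

lemma zero_in_local_fract [simp]: "0 \<in> local_fract P"
  by (simp add: Zero_fract_def)

lemma one_in_local_fract [simp]: "1 \<in> local_fract P"
  by (simp add: One_fract_def)

lemma inverse_Fract_1_in_local_fract:
  assumes "coprime d P"
  shows "inverse (Fract d 1) \<in> local_fract P"
  using assms by (cases "d = 0") (simp_all add: eq_fract(2) Fract_in_local_fract)

lemma local_fract_add:
  assumes "x \<in> local_fract P" and "y \<in> local_fract P"
  shows "x + y \<in> local_fract P"
proof -
  obtain c d c' d' where "d \<noteq> 0" "coprime d P" "x = Fract c d" "d' \<noteq> 0" "coprime d' P" "y = Fract c' d'"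
    using assms by (auto simp: local_fract_def)
  then show ?thesis
    by (simp add: Fract_in_local_fract)
qed

lemma local_fract_uminus:
  assumes "x \<in> local_fract P"
  shows "- x \<in> local_fract P"
proof -
  obtain c d where "d \<noteq> 0" "coprime d P" "x = Fract c d"
    using assms by (auto simp: local_fract_def)
  then show ?thesis
    by (simp add: Fract_in_local_fract)
qed

lemma local_fract_mult:
  assumes "x \<in> local_fract P" and "y \<in> local_fract P"
  shows "x * y \<in> local_fract P"
proof -
  obtain c d c' d' where "d \<noteq> 0" "coprime d P" "x = Fract c d" "d' \<noteq> 0" "coprime d' P" "y = Fract c' d'"
    using assms by (auto simp: local_fract_def)
  then show ?thesis
    by (simp add: Fract_in_local_fract)
qed

lemma local_fract_diff: "x \<in> local_fract P \<Longrightarrow> y \<in> local_fract P \<Longrightarrow> x - y \<in> local_fract P"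
  using local_fract_add local_fract_uminus by (metis diff_conv_add_uminus)

lemma local_fract_power: "x \<in> local_fract P \<Longrightarrow> x ^ k \<in> local_fract P"
  by (induction k) (simp_all add: local_fract_mult)

lemma local_fract_qpoch:
  "x \<in> local_fract P \<Longrightarrow> q \<in> local_fract P \<Longrightarrow> qpoch x q k \<in> local_fract P"
  by (induction k) (simp_all add: qpoch_Suc local_fract_mult local_fract_diff local_fract_power)

lemma zero_in_local_ideal: "0 \<in> local_ideal P I"
  unfolding local_ideal_def by (auto intro: exI [of _ 0])

lemma local_ideal_iff:
  "x \<in> local_ideal P I \<longleftrightarrow> (\<exists>c d. d \<noteq> 0 \<and> coprime d P \<and> x = Fract (I * c) d)"
proof
  assume "x \<in> local_ideal P I"
  then obtain c d where "d \<noteq> 0" "coprime d P" "x = Fract I 1 * Fract c d"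
    by (auto simp: local_ideal_def local_fract_def)
  then show "\<exists>c d. d \<noteq> 0 \<and> coprime d P \<and> x = Fract (I * c) d"
    by (intro exI [of _ c] exI [of _ d]) simp
next
  assume "\<exists>c d. d \<noteq> 0 \<and> coprime d P \<and> x = Fract (I * c) d"
  then obtain c d where "d \<noteq> 0" "coprime d P" "x = Fract I 1 * Fract c d"
    by auto
  moreover have "Fract c d \<in> local_fract P"
    using calculation by (simp add: Fract_in_local_fract)
  ultimately show "x \<in> local_ideal P I"
    unfolding local_ideal_def by blast
qed

lemma local_ideal_add:
  assumes "x \<in> local_ideal P I" and "y \<in> local_ideal P I"
  shows "x + y \<in> local_ideal P I"
proof -
  obtain u v where "u \<in> local_fract P" "v \<in> local_fract P" "x = Fract I 1 * u" "y = Fract I 1 * v"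
    using assms by (auto simp: local_ideal_def)
  then have "x + y = Fract I 1 * (u + v)" and "u + v \<in> local_fract P"
    by (simp_all add: distrib_left local_fract_add)
  then show ?thesis
    by (auto simp: local_ideal_def)
qed

lemma local_ideal_mult:
  assumes "z \<in> local_fract P" and "x \<in> local_ideal P I"
  shows "z * x \<in> local_ideal P I"
proof -
  obtain u where "u \<in> local_fract P" "x = Fract I 1 * u"
    using assms(2) by (auto simp: local_ideal_def)
  then have "z * x = Fract I 1 * (z * u)" and "z * u \<in> local_fract P"
    using assms(1) by (simp_all add: mult.left_commute local_fract_mult)
  then show ?thesis
    by (auto simp: local_ideal_def)
qed

lemma local_ideal_mult_coprime:
  assumes "coprime I J" and "x \<in> local_ideal P I" and "x \<in> local_ideal P J"
  shows "x \<in> local_ideal P (I * J)"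
proof -
  obtain c1 d1 where d1: "d1 \<noteq> 0" "coprime d1 P" and x1: "x = Fract (I * c1) d1"
    using assms(2) by (auto simp: local_ideal_iff)
  obtain c2 d2 where d2: "d2 \<noteq> 0" "coprime d2 P" and x2: "x = Fract (J * c2) d2"
    using assms(3) by (auto simp: local_ideal_iff)
  have "I * c1 * d2 = J * c2 * d1"
    using x1 x2 d1 d2 by (simp add: eq_fract)
  then have "I * J dvd I * c1 * d2"
    using assms(1) by (metis divides_mult dvd_triv_left dvd_mult2 mult.assoc)
  then obtain e where e: "I * c1 * d2 = I * J * e" ..
  have "x = Fract (I * J * e) (d1 * d2)"
    using x1 d2 e by (metis mult.commute mult_fract_cancel)
  then show ?thesis
    using d1 d2 unfolding local_ideal_iff by (intro exI [of _ e] exI [of _ "d1 * d2"]) simp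
qed

lemma local_cong_refl: "local_cong P I x x"
  by (simp add: local_cong_def zero_in_local_ideal)

lemma local_cong_add:
  "local_cong P I x y \<Longrightarrow> local_cong P I x' y' \<Longrightarrow> local_cong P I (x + x') (y + y')"
  unfolding local_cong_def by (metis add_diff_add local_ideal_add)

lemma local_cong_mult:
  assumes "x \<in> local_fract P" and "y' \<in> local_fract P"
    and "local_cong P I x y" and "local_cong P I x' y'"
  shows "local_cong P I (x * x') (y * y')"
proof -
  have "x * x' - y * y' = x * (x' - y') + y' * (x - y)"
    by (simp add: algebra_simps)
  then show ?thesis
    using assms unfolding local_cong_def by (simp add: local_ideal_add local_ideal_mult)
qed

lemma local_cong_qpoch:
  assumes "x \<in> local_fract P" and "y \<in> local_fract P" and "q \<in> local_fract P"
    and "local_cong P I x y"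
  shows "local_cong P I (qpoch x q k) (qpoch y q k)"
proof (induction k)
  case 0
  then show ?case
    by (simp add: local_cong_refl)
next
  case (Suc k)
  have "- (q ^ k) * (x - y) \<in> local_ideal P I"
    using assms unfolding local_cong_def
    by (intro local_ideal_mult local_fract_uminus local_fract_power)
  moreover have "1 - x * q ^ k - (1 - y * q ^ k) = - (q ^ k) * (x - y)"
    by (simp add: algebra_simps)
  ultimately have "local_cong P I (1 - x * q ^ k) (1 - y * q ^ k)"
    by (simp only: local_cong_def)
  then show ?case
    unfolding qpoch_Suc using assms Suc
    by (intro local_cong_mult local_fract_qpoch local_fract_diff local_fract_mult local_fract_power)
      simp_all
qed

lemma local_cong_sum:
  "(\<And>k. k \<in> A \<Longrightarrow> local_cong P I (f k) (g k)) \<Longrightarrow> local_cong P I (sum f A) (sum g A)"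
  by (induction A rule: infinite_finite_induct) (simp_all add: local_cong_refl local_cong_add)

lemma local_cong_qchu:
  fixes p x y b :: "'a::{idom,semiring_gcd} fract"
  assumes "x \<in> local_fract P" "y \<in> local_fract P" "p \<in> local_fract P" "b \<in> local_fract P"
    and "inverse p \<in> local_fract P" "\<And>k. inverse (qpoch p p k) \<in> local_fract P"
    and "p \<noteq> 0" "\<And>j. qpoch p p j \<noteq> 0"
    and "local_cong P I x (inverse p ^ m)" "local_cong P I y b" "m < N"
  shows "local_cong P I (\<Sum>k<N. qpoch x p k * qpoch y p k * p ^ k / qpoch p p k) (b ^ m)"
proof -
  have "local_cong P I (\<Sum>k<N. qpoch x p k * qpoch y p k * p ^ k / qpoch p p k)
      (\<Sum>k<N. qpoch (inverse p ^ m) p k * qpoch b p k * p ^ k / qpoch p p k)"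
    unfolding divide_inverse using assms
    by (intro local_cong_sum local_cong_mult local_cong_qpoch local_cong_refl
        local_fract_mult local_fract_qpoch local_fract_power) auto
  then show ?thesis
    using qchu_vandermonde [OF assms(7,8,11)] by simp
qed

lemma local_cong_qchu_mult_coprime:
  fixes p x y b :: "'a::{idom,semiring_gcd} fract"
  assumes "x \<in> local_fract P" "y \<in> local_fract P" "p \<in> local_fract P" "b \<in> local_fract P"
    and "inverse p \<in> local_fract P" "\<And>k. inverse (qpoch p p k) \<in> local_fract P"
    and "p \<noteq> 0" "\<And>j. qpoch p p j \<noteq> 0" and "coprime I J"
    and "local_cong P I x (inverse p ^ m)" "local_cong P I y b"
    and "local_cong P J x b" "local_cong P J y (inverse p ^ m)" and "m < N"
  shows "local_cong P (I * J) (\<Sum>k<N. qpoch x p k * qpoch y p k * p ^ k / qpoch p p k) (b ^ m)"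
proof -
  have "local_cong P I (\<Sum>k<N. qpoch x p k * qpoch y p k * p ^ k / qpoch p p k) (b ^ m)"
    using assms by (intro local_cong_qchu)
  moreover have "local_cong P J (\<Sum>k<N. qpoch y p k * qpoch x p k * p ^ k / qpoch p p k) (b ^ m)"
    using assms by (intro local_cong_qchu)
  then have "local_cong P J (\<Sum>k<N. qpoch x p k * qpoch y p k * p ^ k / qpoch p p k) (b ^ m)"
    by (simp add: mult.commute)
  ultimately show ?thesis
    using \<open>coprime I J\<close> unfolding local_cong_def by (intro local_ideal_mult_coprime)
qed

lemma cong_rf_iff_local_cong: "cong_rf A B P \<longleftrightarrow> local_cong P P A B"
  unfolding cong_rf_def local_cong_def local_ideal_iff ..

lemma to_rf_mult [simp]: "to_rf (a * b) = to_rf a * to_rf b"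
  by (simp add: to_rf_def)

lemma to_rf_diff [simp]: "to_rf (a - b) = to_rf a - to_rf b"
  by (simp add: to_rf_def)

lemma to_rf_1 [simp]: "to_rf 1 = 1"
  by (simp add: to_rf_def One_fract_def)

lemma to_rf_uminus [simp]: "to_rf (- a) = - to_rf a"
  by (simp add: to_rf_def)

lemma to_rf_power: "to_rf (a ^ k) = to_rf a ^ k"
  by (induction k) simp_all

lemma to_rf_eq_0_iff [simp]: "to_rf a = 0 \<longleftrightarrow> a = 0"
  by (simp add: to_rf_def Zero_fract_def eq_fract)

lemma to_rf_qpoch: "to_rf (qpoch a b k) = qpoch (to_rf a) (to_rf b) k"
  by (induction k) (simp_all add: qpoch_Suc to_rf_power)

lemma to_rf_in_local_fract [simp]: "to_rf c \<in> local_fract P"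
  by (simp add: to_rf_def)

lemma inverse_to_rf_in_local_fract: "coprime d P \<Longrightarrow> inverse (to_rf d) \<in> local_fract P"
  unfolding to_rf_def by (rule inverse_Fract_1_in_local_fract)

lemma local_cong_to_rfI:
  assumes "d \<noteq> 0" "coprime d P" "x - y = to_rf I * to_rf c / to_rf d"
  shows "local_cong P I x y"
  using assms unfolding local_cong_def local_ideal_iff to_rf_def by auto

lemma coprime_const_poly:
  fixes c :: "'a::{idom_divide,algebraic_semidom}"
  assumes "c \<noteq> 0" and "is_unit (coeff Q i)"
  shows "coprime [:c:] Q"
proof (rule coprimeI)
  fix d
  assume "d dvd [:c:]" and "d dvd Q"
  have "degree d = 0"
    using dvd_imp_degree_le [OF \<open>d dvd [:c:]\<close>] assms(1) by simp
  then have d: "d = [:coeff d 0:]"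
    by (simp add: degree_0_id)
  then have "coeff d 0 dvd coeff Q i"
    using \<open>d dvd Q\<close> const_poly_dvd_iff by metis
  then show "is_unit d"
    using assms(2) d by (metis is_unit_const_poly_iff dvd_unit_imp_unit)
qed

lemma var_q_power: "var_q ^ k = [:[:0, 1:] ^ k:]"
  by (simp add: var_q_def poly_const_pow)

lemma qpoch_const_poly: "qpoch [:x:] [:y:] k = [:qpoch x y k:]"
  by (induction k) (simp_all add: qpoch_Suc poly_const_pow one_pCons mult_ac)

lemma qpoch_var_q_square: "qpoch (var_q ^ 2) (var_q ^ 2) k = [:qpoch ([:0, 1:] ^ 2) ([:0, 1:] ^ 2) k:]"
  by (simp add: var_q_power qpoch_const_poly)

lemma qpoch_X_square_neq_0: "qpoch ([:0, 1:] ^ 2) ([:0, 1:] ^ 2) k \<noteq> (0 :: int poly)"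
proof -
  have "[:0, 1:] ^ 2 * ([:0, 1:] ^ 2) ^ j \<noteq> (1 :: int poly)" for j
  proof
    assume "[:0, 1:] ^ 2 * ([:0, 1:] ^ 2) ^ j = (1 :: int poly)"
    then have "coeff ([:0, 1:] ^ 2 * ([:0, 1:] ^ 2) ^ j) 0 = coeff (1 :: int poly) 0"
      by (rule arg_cong)
    then show False
      by (simp add: power2_eq_square)
  qed
  then show ?thesis
    unfolding qpoch_def by (auto simp: prod_zero_iff)
qed

lemma coprime_X_pCons_1:
  fixes e :: "'a::{idom_divide,algebraic_semidom}"
  shows "coprime [:0, 1:] [:1, e:]"
proof (rule coprimeI)
  fix d
  assume "d dvd [:0, 1:]" and "d dvd [:1, e:]"
  then have "d dvd [:1, e:] - [:e:] * [:0, 1:]"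
    by (intro dvd_diff dvd_mult)
  then show "is_unit d"
    by (simp add: one_pCons)
qed

lemma coprime_X_pCons:
  fixes f :: "'a::{idom_divide,algebraic_semidom}"
  assumes "f \<noteq> 0"
  shows "coprime [:0, 1:] [:f, 1:]"
proof (rule coprimeI)
  fix d
  assume "d dvd [:0, 1:]" and "d dvd [:f, 1:]"
  moreover have "[:f, 1:] - [:0, 1:] = [:f:]"
    by simp
  ultimately have "d dvd [:f:]"
    by (metis dvd_diff)
  then show "is_unit d"
    using coprime_const_poly [OF assms, of "[:0, 1:]" 1] \<open>d dvd [:0, 1:]\<close>
    by (auto intro: coprime_common_divisor)
qed

lemma coprime_linear_polys:
  fixes e f :: "'a::{idom_divide,algebraic_semidom}"
  assumes "1 - e * f \<noteq> 0"
  shows "coprime [:1, e:] [:f, 1:]"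
proof (rule coprimeI)
  fix d
  assume "d dvd [:1, e:]" and "d dvd [:f, 1:]"
  moreover have "[:1, e:] - [:e:] * [:f, 1:] = [:1 - e * f:]"
    by simp
  ultimately have "d dvd [:1 - e * f:]"
    by (metis dvd_diff dvd_mult)
  then show "is_unit d"
    using coprime_const_poly [OF assms, of "[:f, 1:]" 1] \<open>d dvd [:f, 1:]\<close>
    by (auto intro: coprime_common_divisor)
qed

lemma coprime_moduli:
  fixes s :: bipoly
  assumes "s \<noteq> 0" and "degree s = 0" and "n > 0"
  defines "P \<equiv> (1 - var_a * var_q ^ n) * (var_a - s * var_q ^ n)"
  shows "coprime (1 - var_a * var_q ^ n) (var_a - s * var_q ^ n)"
    and "coprime var_a P" and "coprime var_q P" and "coprime (qpoch (var_q ^ 2) (var_q ^ 2) k) P"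
proof -
  obtain c where s: "s = [:c:]" and "c \<noteq> 0"
    using assms(1,2) by (metis degree_0_id pCons_0_0)
  have P1: "1 - var_a * var_q ^ n = [:1, - ([:0, 1:] ^ n):]"
    by (simp add: var_a_def var_q_power one_pCons)
  have P2: "var_a - s * var_q ^ n = [:- (c * [:0, 1:] ^ n), 1:]"
    by (simp add: s var_a_def var_q_power)
  have "coeff (1 - [:0, 1:] ^ n * (c * [:0, 1:] ^ n)) 0 = 1"
    using \<open>n > 0\<close> by (simp add: coeff_mult_0 coeff_0_power)
  then have "1 - (- ([:0, 1:] ^ n)) * (- (c * [:0, 1:] ^ n)) \<noteq> 0"
    by auto
  then show "coprime (1 - var_a * var_q ^ n) (var_a - s * var_q ^ n)"
    unfolding P1 P2 by (rule coprime_linear_polys)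
  show "coprime var_a P"
    using \<open>c \<noteq> 0\<close> unfolding P_def coprime_mult_right_iff P1 P2 unfolding var_a_def
    by (intro conjI coprime_X_pCons_1 coprime_X_pCons) simp
  have const: "coprime [:e:] P" if "e \<noteq> 0" for e
    unfolding P_def coprime_mult_right_iff P1 P2
    using coprime_const_poly [OF that, of _ 0] coprime_const_poly [OF that, of _ 1] by simp
  show "coprime var_q P"
    unfolding var_q_def by (rule const) simp
  show "coprime (qpoch (var_q ^ 2) (var_q ^ 2) k) P"
    unfolding qpoch_var_q_square by (rule const) (rule qpoch_X_square_neq_0)
qed

lemma congruences_mod_moduli:
  fixes s :: bipoly
  assumes "s \<noteq> 0" and "degree s = 0" and n: "n = 2 * m + 1"
  defines "P1 \<equiv> 1 - var_a * var_q ^ n" and "P2 \<equiv> var_a - s * var_q ^ n"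
    and "A \<equiv> to_rf var_a" and "Q \<equiv> to_rf var_q" and "S \<equiv> to_rf s"
  shows "local_cong (P1 * P2) P1 (A * Q) (inverse (Q ^ 2) ^ m)"
    and "local_cong (P1 * P2) P1 (S * Q / A) (S * (Q ^ 2) ^ Suc m)"
    and "local_cong (P1 * P2) P2 (A * Q) (S * (Q ^ 2) ^ Suc m)"
    and "local_cong (P1 * P2) P2 (S * Q / A) (inverse (Q ^ 2) ^ m)"
proof -
  have coprime_a: "coprime var_a (P1 * P2)" and coprime_q: "coprime var_q (P1 * P2)"
    using coprime_moduli [OF assms(1,2), of n] n unfolding P1_def P2_def by simp_all
  have "var_a \<noteq> 0" "var_q \<noteq> 0"
    by (simp_all add: var_a_def var_q_def)
  then have "A \<noteq> 0" "Q \<noteq> 0"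
    by (simp_all add: A_def Q_def)
  have Q2m: "(Q ^ 2) ^ m = to_rf ((var_q ^ 2) ^ m)"
    by (simp add: Q_def to_rf_power)
  have "Q ^ n = Q * (Q ^ 2) ^ m"
    by (simp add: n power_mult)
  then have P1: "to_rf P1 = 1 - A * (Q * (Q ^ 2) ^ m)" and P2: "to_rf P2 = A - S * (Q * (Q ^ 2) ^ m)"
    by (simp_all add: P1_def P2_def A_def Q_def S_def to_rf_power)
  have "A * Q - inverse (Q ^ 2) ^ m = to_rf P1 * to_rf (- 1) / to_rf ((var_q ^ 2) ^ m)"
    using \<open>Q \<noteq> 0\<close> unfolding P1 Q2m [symmetric] by (simp add: field_simps)
  then show "local_cong (P1 * P2) P1 (A * Q) (inverse (Q ^ 2) ^ m)"
    by (rule local_cong_to_rfI [rotated 2]) (use coprime_q \<open>var_q \<noteq> 0\<close> in simp_all)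
  have "S * Q / A - S * (Q ^ 2) ^ Suc m = to_rf P1 * to_rf (s * var_q) / to_rf var_a"
    using \<open>A \<noteq> 0\<close> unfolding P1
    by (simp add: A_def [symmetric] Q_def [symmetric] S_def [symmetric] field_simps power2_eq_square)
  then show "local_cong (P1 * P2) P1 (S * Q / A) (S * (Q ^ 2) ^ Suc m)"
    by (rule local_cong_to_rfI [rotated 2]) (use coprime_a \<open>var_a \<noteq> 0\<close> in simp_all)
  have "A * Q - S * (Q ^ 2) ^ Suc m = to_rf P2 * to_rf var_q / to_rf 1"
    unfolding P2 by (simp add: Q_def [symmetric] power2_eq_square algebra_simps)
  then show "local_cong (P1 * P2) P2 (A * Q) (S * (Q ^ 2) ^ Suc m)"
    by (rule local_cong_to_rfI [rotated 2]) simp_all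
  have "S * Q / A - inverse (Q ^ 2) ^ m = to_rf P2 * to_rf (- 1) / to_rf (var_a * (var_q ^ 2) ^ m)"
    using \<open>A \<noteq> 0\<close> \<open>Q \<noteq> 0\<close> unfolding P2 to_rf_mult Q2m [symmetric]
    by (simp add: A_def [symmetric] field_simps)
  then show "local_cong (P1 * P2) P2 (S * Q / A) (inverse (Q ^ 2) ^ m)"
    by (rule local_cong_to_rfI [rotated 2])
      (use coprime_a coprime_q \<open>var_a \<noteq> 0\<close> \<open>var_q \<noteq> 0\<close> in simp_all)
qed

lemma truncated_sum_cong_rf:
  fixes s :: bipoly and n :: nat
  assumes "s \<noteq> 0" and "degree s = 0" and "odd n"
  shows "cong_rf
      (\<Sum>k<n. qpoch (to_rf var_a * to_rf var_q) ((to_rf var_q)^2) k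
              * qpoch (to_rf s * to_rf var_q / to_rf var_a) ((to_rf var_q)^2) k
              * (to_rf var_q) ^ (2 * k)
              / qpoch ((to_rf var_q)^2) ((to_rf var_q)^2) k)
      (to_rf s ^ ((n - 1) div 2) * (to_rf var_q) ^ ((n^2 - 1) div 2))
      ((1 - var_a * var_q ^ n) * (var_a - s * var_q ^ n))"
proof -
  obtain m where n: "n = 2 * m + 1"
    using \<open>odd n\<close> oddE by blast
  define P1 P2 where "P1 = 1 - var_a * var_q ^ n" and "P2 = var_a - s * var_q ^ n"
  define A Q S where "A = to_rf var_a" and "Q = to_rf var_q" and "S = to_rf s"
  define p b where "p = Q ^ 2" and "b = S * p ^ Suc m"
  have coprimes: "coprime P1 P2" "coprime var_a (P1 * P2)" "coprime (var_q ^ 2) (P1 * P2)"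
    "coprime (qpoch (var_q ^ 2) (var_q ^ 2) k) (P1 * P2)" for k
    using coprime_moduli [OF assms(1,2), of n] n unfolding P1_def P2_def by simp_all
  have poch: "qpoch p p k = to_rf (qpoch (var_q ^ 2) (var_q ^ 2) k)" for k
    by (simp add: p_def Q_def to_rf_qpoch to_rf_power)
  have "p \<noteq> 0"
    by (simp add: p_def Q_def var_q_def)
  moreover have "qpoch p p k \<noteq> 0" for k
    unfolding poch using qpoch_X_square_neq_0 [of k] by (simp add: qpoch_var_q_square)
  moreover have "inverse A \<in> local_fract (P1 * P2)" "inverse p \<in> local_fract (P1 * P2)"
    "inverse (qpoch p p k) \<in> local_fract (P1 * P2)" for k
    using coprimes(2-4) unfolding A_def p_def Q_def
    by (simp_all add: inverse_to_rf_in_local_fract flip: to_rf_power to_rf_qpoch)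
  ultimately have "local_cong (P1 * P2) (P1 * P2)
      (\<Sum>k<n. qpoch (A * Q) p k * qpoch (S * Q / A) p k * p ^ k / qpoch p p k) (b ^ m)"
    using coprimes(1) congruences_mod_moduli [OF assms(1,2) n] n
    unfolding P1_def P2_def A_def Q_def S_def b_def p_def
    by (intro local_cong_qchu_mult_coprime) (simp_all add: local_fract_mult local_fract_power divide_inverse)
  moreover have "(n\<^sup>2 - 1) div 2 = 2 * (Suc m * m)" "(n - 1) div 2 = m"
    unfolding n by (simp_all add: power2_eq_square algebra_simps)
  then have "b ^ m = S ^ ((n - 1) div 2) * Q ^ ((n\<^sup>2 - 1) div 2)"
    unfolding b_def p_def by (simp only: power_mult_distrib power_mult)
  ultimately show ?thesis
    unfolding cong_rf_iff_local_cong by (simp add: P1_def P2_def A_def Q_def S_def p_def power_mult)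
qed

theorem theorem4p5:
  fixes n :: nat
  assumes "odd n"
  shows "cong_rf
           (\<Sum>k<n. qpoch (to_rf var_a * to_rf var_q) ((to_rf var_q)^2) k
                   * qpoch (- to_rf var_q / to_rf var_a) ((to_rf var_q)^2) k
                   * (to_rf var_q) ^ (2 * k)
                   / qpoch ((to_rf var_q)^2) ((to_rf var_q)^2) k)
           ((-1) ^ ((n - 1) div 2) * (to_rf var_q) ^ ((n^2 - 1) div 2))
           ((1 - var_a * var_q ^ n) * (var_a + var_q ^ n))
       \<and> cong_rf
           (\<Sum>k<n. qpoch (to_rf var_a * to_rf var_q) ((to_rf var_q)^2) k
                   * qpoch (to_rf var_q / to_rf var_a) ((to_rf var_q)^2) k
                   * (to_rf var_q) ^ (2 * k)
                   / qpoch ((to_rf var_q)^2) ((to_rf var_q)^2) k)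
           ((to_rf var_q) ^ ((n^2 - 1) div 2))
           ((1 - var_a * var_q ^ n) * (var_a - var_q ^ n))"
  using truncated_sum_cong_rf [of "-1" n] truncated_sum_cong_rf [of 1 n] assms by simp

end
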